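(* Let $\vartheta_1,\ldots,\vartheta_t$ be real numbers, $d$ a positive integer, $\tau_1,\tau_2$ positive real numbers, and $\sigma$ a non-decreasing positive function on the positive integers with $\lim_{n\to\infty}\sigma(n)=\infty$. Assume there is a sequence $(P_n)_{n\ge0}$ of polynomials in $\mathbb{Z}[X_1,\ldots,X_t]$, with $P_n$ of total degree at most $d$ and length at most $e^{\sigma(n)}$, such that $$e^{-(\tau_1+o(1))\sigma(n)}\le|P_n(\vartheta_1,\ldots,\vartheta_t)|\le e^{-(\tau_2+o(1))\sigma(n+1)}$$ as $n\to\infty$. Then $$\tau_2\le\left(\binom{d+t}{t}-1\right)(1+\tau_1-\tau_2).$$
   Context: The length of a polynomial with integer coefficients is the sum of the absolute values of its coefficients. $o(1)$ denotes quantities tending to $0$ as $n\to\infty$. *)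

theory Defs
  imports Complex_Main
begin

text \<open>Integer polynomials in t variables X_0..X_(t-1) are represented by their
coefficient functions on exponent vectors (nat \<Rightarrow> nat), i.e. c :: (nat \<Rightarrow> nat) \<Rightarrow> int.\<close>

definition monomials :: "nat \<Rightarrow> nat \<Rightarrow> (nat \<Rightarrow> nat) set" where
  "monomials t d = {\<alpha>. (\<forall>i\<ge>t. \<alpha> i = 0) \<and> (\<Sum>i<t. \<alpha> i) \<le> d}"

definition is_mpoly_deg :: "nat \<Rightarrow> nat \<Rightarrow> ((nat \<Rightarrow> nat) \<Rightarrow> int) \<Rightarrow> bool" where
  "is_mpoly_deg t d c \<longleftrightarrow> (\<forall>\<alpha>. \<alpha> \<notin> monomials t d \<longrightarrow> c \<alpha> = 0)"

definition mpoly_eval :: "nat \<Rightarrow> nat \<Rightarrow> ((nat \<Rightarrow> nat) \<Rightarrow> int) \<Rightarrow> (nat \<Rightarrow> real) \<Rightarrow> real" where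
  "mpoly_eval t d c \<theta> = (\<Sum>\<alpha>\<in>monomials t d. real_of_int (c \<alpha>) * (\<Prod>i<t. \<theta> i ^ \<alpha> i))"

definition mpoly_length :: "nat \<Rightarrow> nat \<Rightarrow> ((nat \<Rightarrow> nat) \<Rightarrow> int) \<Rightarrow> int" where
  "mpoly_length t d c = (\<Sum>\<alpha>\<in>monomials t d. \<bar>c \<alpha>\<bar>)"

end

theory Submission
  imports Defs "HOL-Library.FuncSet"
begin

(* Write L_n = P_n(theta) as a linear form  sum_{alpha in M} P_n(alpha) x_alpha  in the
   K + 1 = binom(d+t, t) monomial values x_alpha, where x_0 = 1.  Suppose
   b > K (1 + a - b) with exact exponents a, b.  For a large integer Q, Dirichlet's
   pigeonhole principle gives 1 <= q <= Q^K with all q x_alpha within 1/Q of integers.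
   Take n minimal with q exp(-b sigma(n+1)) < 1/2.  The integer nearest to q L_n is then
   either 0, forcing q |L_n| <= exp(sigma n) / Q, or nonzero, forcing Q < 2 exp(sigma n);
   comparing with the lower bound exp(-a sigma n) <= |L_n| and with the minimality of n
   yields a contradiction once ln Q is large.

   Letting the o(1) perturbations tend to 0 gives the asymptotic version,
   and the main theorem is its instance for the monomials of degree at most d. *)

text \<open>The number of monomials in \<open>t\<close> variables of total degree at most \<open>d\<close> is
  \<open>(d + t) choose t\<close>; splitting off the exponent of the last variable gives the recursion.\<close>

lemma monomials_Suc:
  "monomials (Suc t) d = (\<lambda>(k,\<beta>). \<beta>(t:=k)) ` (SIGMA k:{..d}. monomials t (d-k))"
proof (rule set_eqI, rule iffI)
  fix \<alpha> assume a: "\<alpha> \<in> monomials (Suc t) d"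
  have s: "(\<Sum>i<Suc t. \<alpha> i) = (\<Sum>i<t. \<alpha> i) + \<alpha> t" by simp
  have z: "\<forall>i\<ge>Suc t. \<alpha> i = 0" and le: "(\<Sum>i<Suc t. \<alpha> i) \<le> d" using a by (auto simp: monomials_def)
  have "(\<Sum>i<t. (\<alpha>(t:=0)) i) = (\<Sum>i<t. \<alpha> i)" by (rule sum.cong) auto
  then have "\<alpha>(t:=0) \<in> monomials t (d - \<alpha> t)" using z le s
    unfolding monomials_def by (simp add: le_diff_conv2)
  moreover have "\<alpha> t \<in> {..d}" using le s by simp
  moreover have "\<alpha> = (\<lambda>(k,\<beta>). \<beta>(t:=k)) (\<alpha> t, \<alpha>(t:=0))" by simp
  ultimately show "\<alpha> \<in> (\<lambda>(k,\<beta>). \<beta>(t:=k)) ` (SIGMA k:{..d}. monomials t (d-k))"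
    by (intro image_eqI[where x="(\<alpha> t, \<alpha>(t:=0))"]) auto
next
  fix \<alpha> assume "\<alpha> \<in> (\<lambda>(k,\<beta>). \<beta>(t:=k)) ` (SIGMA k:{..d}. monomials t (d-k))"
  then obtain k \<beta> where k: "k \<le> d" and b: "\<beta> \<in> monomials t (d-k)" and al: "\<alpha> = \<beta>(t:=k)" by auto
  have "(\<Sum>i<t. \<alpha> i) = (\<Sum>i<t. \<beta> i)" unfolding al by (rule sum.cong) auto
  then show "\<alpha> \<in> monomials (Suc t) d" using b k unfolding al by (auto simp: monomials_def)
qed

lemma monomials_card: "finite (monomials t d) \<and> card (monomials t d) = (d + t) choose t"
proof (induction t arbitrary: d)
  case 0
  have "monomials 0 d = {\<lambda>_. 0}" by (auto simp: monomials_def)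
  then show ?case by simp
next
  case (Suc t)
  have inj: "inj_on (\<lambda>(k,\<beta>). \<beta>(t:=k)) (SIGMA k:{..d}. monomials t (d-k))"
  proof (rule inj_onI, clarsimp)
    fix k \<beta> k' \<beta>' assume "\<beta> \<in> monomials t (d-k)" "\<beta>' \<in> monomials t (d-k')" and e: "\<beta>(t:=k) = \<beta>'(t:=k')"
    then have "\<beta> t = 0" "\<beta>' t = 0" by (auto simp: monomials_def)
    moreover have "k = k'" using fun_cong[OF e, of t] by simp
    moreover have "\<forall>i. i \<noteq> t \<longrightarrow> \<beta> i = \<beta>' i" using e by (metis fun_upd_other)
    ultimately show "k = k' \<and> \<beta> = \<beta>'" by (metis ext)
  qed
  have fin: "finite (SIGMA k:{..d}. monomials t (d-k))" using Suc by auto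
  have "card (monomials (Suc t) d) = card (SIGMA k:{..d}. monomials t (d-k))"
    unfolding monomials_Suc by (rule card_image[OF inj])
  also have "\<dots> = (\<Sum>k\<le>d. (d - k + t) choose t)" using Suc by (simp add: card_SigmaI)
  also have "\<dots> = (\<Sum>k\<le>d. (t + k) choose k)"
  proof -
    have "(\<Sum>k\<le>d. (d - k + t) choose t) = (\<Sum>k\<le>d. (k + t) choose t)"
      by (rule sum.reindex_bij_witness[of _ "\<lambda>k. d - k" "\<lambda>k. d - k"]) (simp_all add: atMost_iff)
    also have "\<dots> = (\<Sum>k\<le>d. (t + k) choose k)"
    proof (rule sum.cong[OF refl])
      fix k show "(k + t) choose t = (t + k) choose k"
        using binomial_symmetric[of t "k+t"] by (simp add: add.commute)
    qed
    finally show ?thesis .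
  qed
  also have "\<dots> = Suc (t + d) choose d" by (rule sum_choose_lower)
  also have "\<dots> = (d + Suc t) choose Suc t"
    using binomial_symmetric[of d "Suc (t+d)"] by (simp add: add.commute)
  finally show ?case using fin monomials_Suc by simp
qed

text \<open>Dirichlet's simultaneous approximation theorem, by the pigeonhole principle applied to
  the fractional parts of \<open>q f i\<close> for \<open>0 \<le> q \<le> Q ^ card I\<close>.\<close>

lemma floor_close:
  fixes Q x y :: real
  assumes "\<lfloor>Q * x\<rfloor> = \<lfloor>Q * y\<rfloor>" "Q > 0"
  shows "\<bar>x - y\<bar> \<le> 1 / Q"
proof -
  have "\<bar>Q * x - Q * y\<bar> < 1" using assms(1) by linarith
  then have "Q * \<bar>x - y\<bar> \<le> 1" using assms(2) by (simp add: abs_mult right_diff_distrib[symmetric])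
  then show ?thesis using assms(2) by (simp add: field_simps)
qed

lemma dirichlet_simultaneous:
  fixes I :: "'a set" and f :: "'a \<Rightarrow> real" and Q :: nat
  assumes fin: "finite I" and Q: "Q \<ge> 1"
  shows "\<exists>q::nat. 1 \<le> q \<and> q \<le> Q ^ card I \<and> (\<exists>A::'a \<Rightarrow> int. \<forall>i\<in>I. \<bar>real q * f i - A i\<bar> \<le> 1 / Q)"
proof -
  define box where "box = (\<lambda>q::nat. \<lambda>i\<in>I. \<lfloor>real Q * frac (real q * f i)\<rfloor>)"
  have maps: "box ` {0..Q ^ card I} \<subseteq> PiE I (\<lambda>_. {0..<int Q})"
  proof -
    have "0 \<le> \<lfloor>real Q * frac (real q * f i)\<rfloor> \<and> \<lfloor>real Q * frac (real q * f i)\<rfloor> < int Q" for q i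
    proof -
      have "real Q * frac (real q * f i) < real Q" using Q frac_lt_1[of "real q * f i"] by simp
      then show ?thesis by (simp add: frac_ge_0 floor_less_iff)
    qed
    then show ?thesis by (auto simp: box_def)
  qed
  have "\<not> inj_on box {0..Q ^ card I}"
  proof
    assume "inj_on box {0..Q ^ card I}"
    then have "card {0..Q ^ card I} \<le> card (PiE I (\<lambda>_. {0..<int Q}))"
      by (rule card_inj_on_le[OF _ maps]) (simp add: finite_PiE fin)
    then show False by (simp add: card_PiE fin)
  qed
  then obtain q1 q2 where q: "q1 < q2" "q2 \<le> Q ^ card I" "box q1 = box q2"
    unfolding inj_on_def by (metis atLeastAtMost_iff linorder_neq_iff zero_le)
  show ?thesis
  proof (intro exI conjI ballI)
    show "1 \<le> q2 - q1" "q2 - q1 \<le> Q ^ card I" using q by auto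
  next
    fix i assume i: "i \<in> I"
    have "\<lfloor>real Q * frac (real q2 * f i)\<rfloor> = \<lfloor>real Q * frac (real q1 * f i)\<rfloor>"
      using fun_cong[OF q(3), of i] i unfolding box_def by simp
    then have "\<bar>frac (real q2 * f i) - frac (real q1 * f i)\<bar> \<le> 1 / Q"
      using Q by (intro floor_close) auto
    moreover have "frac (real q2 * f i) - frac (real q1 * f i)
        = real (q2 - q1) * f i - real_of_int (\<lfloor>real q2 * f i\<rfloor> - \<lfloor>real q1 * f i\<rfloor>)"
      using q(1) by (simp add: frac_def of_nat_diff left_diff_distrib)
    ultimately show "\<bar>real (q2 - q1) * f i - real_of_int (\<lfloor>real q2 * f i\<rfloor> - \<lfloor>real q1 * f i\<rfloor>)\<bar> \<le> 1 / Q"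
      by simp
  qed
qed

text \<open>If one of the numbers is \<open>1\<close>, it is approximated exactly, so only the remaining
  \<open>card M - 1\<close> numbers cost a factor \<open>Q\<close> each.\<close>

lemma dirichlet_with_unit:
  fixes M :: "'a set" and x :: "'a \<Rightarrow> real" and Q :: nat
  assumes fin: "finite M" and z: "z \<in> M" "x z = 1" and Q: "Q \<ge> 1"
  shows "\<exists>q::nat. 1 \<le> q \<and> q \<le> Q ^ (card M - 1) \<and>
           (\<exists>A::'a \<Rightarrow> int. \<forall>\<alpha>\<in>M. \<bar>real q * x \<alpha> - A \<alpha>\<bar> \<le> 1 / Q)"
proof -
  obtain q :: nat and A :: "'a \<Rightarrow> int" where q: "1 \<le> q" "q \<le> Q ^ (card M - 1)"
    and A: "\<forall>\<alpha>\<in>M - {z}. \<bar>real q * x \<alpha> - A \<alpha>\<bar> \<le> 1 / Q"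
    using dirichlet_simultaneous[of "M - {z}" Q x] fin z Q by auto
  have "\<forall>\<alpha>\<in>M. \<bar>real q * x \<alpha> - (A(z := int q)) \<alpha>\<bar> \<le> 1 / Q"
    using A z by auto
  then show ?thesis using q by blast
qed

lemma linear_form_approx:
  fixes M :: "'a set" and p A :: "'a \<Rightarrow> int" and x :: "'a \<Rightarrow> real"
  assumes approx: "\<forall>\<alpha>\<in>M. \<bar>q * x \<alpha> - A \<alpha>\<bar> \<le> \<delta>"
  shows "\<bar>q * (\<Sum>\<alpha>\<in>M. p \<alpha> * x \<alpha>) - of_int (\<Sum>\<alpha>\<in>M. p \<alpha> * A \<alpha>)\<bar>
           \<le> (\<Sum>\<alpha>\<in>M. of_int \<bar>p \<alpha>\<bar>) * \<delta>"
proof -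
  have "\<bar>q * (\<Sum>\<alpha>\<in>M. p \<alpha> * x \<alpha>) - of_int (\<Sum>\<alpha>\<in>M. p \<alpha> * A \<alpha>)\<bar>
        = \<bar>\<Sum>\<alpha>\<in>M. of_int (p \<alpha>) * (q * x \<alpha> - A \<alpha>)\<bar>"
    by (simp add: sum_distrib_left sum_subtractf algebra_simps)
  also have "\<dots> \<le> (\<Sum>\<alpha>\<in>M. of_int \<bar>p \<alpha>\<bar> * \<bar>q * x \<alpha> - A \<alpha>\<bar>)"
    by (rule order_trans[OF sum_abs]) (simp add: abs_mult)
  also have "\<dots> \<le> (\<Sum>\<alpha>\<in>M. of_int \<bar>p \<alpha>\<bar> * \<delta>)"
    using approx by (intro sum_mono mult_left_mono) auto
  finally show ?thesis by (simp add: sum_distrib_right)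
qed

text \<open>Hence, if \<open>q L\<close> is smaller than \<open>1/2\<close>, either the approximating integer is \<open>0\<close> and
  \<open>q L\<close> is bounded by the error, or it is nonzero and the error exceeds \<open>1/2\<close>.\<close>

lemma linear_form_dichotomy:
  fixes M :: "'a set" and p A :: "'a \<Rightarrow> int" and x :: "'a \<Rightarrow> real"
  defines "L \<equiv> \<Sum>\<alpha>\<in>M. p \<alpha> * x \<alpha>" and "len \<equiv> \<Sum>\<alpha>\<in>M. of_int \<bar>p \<alpha>\<bar>"
  assumes approx: "\<forall>\<alpha>\<in>M. \<bar>q * x \<alpha> - A \<alpha>\<bar> \<le> \<delta>"
    and small: "\<bar>q * L\<bar> < 1/2"
  shows "\<bar>q * L\<bar> \<le> len * \<delta> \<or> 1/2 < len * \<delta>"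
proof -
  define S where "S = (\<Sum>\<alpha>\<in>M. p \<alpha> * A \<alpha>)"
  have err: "\<bar>q * L - of_int S\<bar> \<le> len * \<delta>"
    unfolding L_def len_def S_def using approx by (rule linear_form_approx)
  show ?thesis
  proof (cases "S = 0")
    case True
    then show ?thesis using err by simp
  next
    case False
    then have "1 \<le> \<bar>real_of_int S\<bar>" by linarith
    then show ?thesis using err small by linarith
  qed
qed

lemma small_linear_form_exponents:
  fixes M :: "'a set" and p A :: "'a \<Rightarrow> int" and x :: "'a \<Rightarrow> real" and q Q s a :: real
  defines "L \<equiv> \<Sum>\<alpha>\<in>M. p \<alpha> * x \<alpha>"
  assumes approx: "\<forall>\<alpha>\<in>M. \<bar>q * x \<alpha> - A \<alpha>\<bar> \<le> 1 / Q"
    and q: "q > 0" and Q: "Q > 0"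
    and length: "(\<Sum>\<alpha>\<in>M. of_int \<bar>p \<alpha>\<bar>) \<le> exp s"
    and lower: "exp (- a * s) \<le> \<bar>L\<bar>"
    and small: "q * \<bar>L\<bar> < 1/2"
  shows "ln q + ln Q \<le> (1 + a) * s \<or> ln Q < ln 2 + s"
proof -
  have length': "(\<Sum>\<alpha>\<in>M. of_int \<bar>p \<alpha>\<bar>) * (1 / Q) \<le> exp s / Q"
    using length Q by (simp add: divide_right_mono)
  have "\<bar>q * L\<bar> \<le> (\<Sum>\<alpha>\<in>M. of_int \<bar>p \<alpha>\<bar>) * (1 / Q) \<or> 1/2 < (\<Sum>\<alpha>\<in>M. of_int \<bar>p \<alpha>\<bar>) * (1 / Q)"
    using approx small q unfolding L_def by (intro linear_form_dichotomy) (auto simp: abs_mult)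
  then show ?thesis
  proof
    assume upper: "\<bar>q * L\<bar> \<le> (\<Sum>\<alpha>\<in>M. of_int \<bar>p \<alpha>\<bar>) * (1 / Q)"
    have "exp (ln q - a * s) = q * exp (- a * s)"
      using q by (simp add: exp_diff exp_minus field_simps)
    also have "\<dots> \<le> \<bar>q * L\<bar>"
      using mult_left_mono[OF lower, of q] q by (simp add: abs_mult)
    also have "\<dots> \<le> exp s / Q" using upper length' by linarith
    also have "\<dots> = exp (s - ln Q)" using Q by (simp add: exp_diff)
    finally show ?thesis by (simp add: algebra_simps)
  next
    assume "1/2 < (\<Sum>\<alpha>\<in>M. of_int \<bar>p \<alpha>\<bar>) * (1 / Q)"
    then have "exp (ln Q) < exp (ln 2 + s)"
      using length' Q by (simp add: exp_add field_simps)
    then show ?thesis by simp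
  qed
qed

lemma first_index_from:
  fixes P :: "nat \<Rightarrow> bool"
  assumes "\<exists>n\<ge>n0. P n"
  shows "\<exists>n\<ge>n0. P n \<and> (n = n0 \<or> \<not> P (n - 1))"
proof -
  define n where "n = (LEAST n. n0 \<le> n \<and> P n)"
  have n: "n0 \<le> n \<and> P n" unfolding n_def using assms by (rule LeastI_ex)
  have "\<not> P (n - 1)" if "n \<noteq> n0"
    using not_less_Least[of "n - 1" "\<lambda>n. n0 \<le> n \<and> P n"] n that unfolding n_def[symmetric] by auto
  then show ?thesis using n by blast
qed

lemma index_choice:
  fixes \<sigma> :: "nat \<Rightarrow> real"
  assumes \<sigma>: "filterlim \<sigma> at_top sequentially" and b: "b > 0" and q: "q > 0"
  shows "\<exists>n\<ge>n0. q * exp (- b * \<sigma> (n + 1)) < 1/2 \<and> (n = n0 \<or> b * \<sigma> n \<le> ln 2 + ln q)"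
proof -
  obtain N0 where "\<And>n. n \<ge> N0 \<Longrightarrow> (ln 2 + ln q + 1) / b \<le> \<sigma> n"
    using \<sigma> unfolding filterlim_at_top eventually_sequentially by blast
  then have N: "(ln 2 + ln q + 1) / b \<le> \<sigma> (max n0 N0 + 1)" "max n0 N0 \<ge> n0"
    by auto
  have "q * exp (- b * \<sigma> (n + 1)) < 1/2 \<longleftrightarrow> ln q - b * \<sigma> (n + 1) < - ln 2" for n
  proof -
    have "q * exp (- b * \<sigma> (n + 1)) = exp (ln q - b * \<sigma> (n + 1))"
      using q by (simp add: exp_diff exp_minus field_simps)
    moreover have "(1/2 :: real) = exp (- ln 2)" by (simp add: exp_minus)
    ultimately show ?thesis by (metis exp_less_cancel_iff)
  qed
  moreover have "ln q - b * \<sigma> (max n0 N0 + 1) < - ln 2"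
    using N b by (simp add: pos_divide_le_eq mult.commute)
  ultimately obtain n where n: "n \<ge> n0" "q * exp (- b * \<sigma> (n + 1)) < 1/2"
    and first: "n = n0 \<or> \<not> ln q - b * \<sigma> (n - 1 + 1) < - ln 2"
    using first_index_from[of n0 "\<lambda>n. q * exp (- b * \<sigma> (n + 1)) < 1/2"] N by blast
  have "n = n0 \<or> b * \<sigma> n \<le> ln 2 + ln q"
    using first n(1) by (cases "n = n0") auto
  then show ?thesis using n by blast
qed

lemma decay_exponents_ordered:
  fixes \<sigma> :: "nat \<Rightarrow> real"
  assumes a: "0 \<le> a" and \<sigma>: "\<sigma> n \<le> \<sigma> (n + 1)" "0 < \<sigma> (n + 1)"
    and bounds: "exp (- a * \<sigma> n) \<le> y" "y \<le> exp (- b * \<sigma> (n + 1))"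
  shows "b \<le> a"
proof -
  have "exp (- b * \<sigma> (n + 1)) \<ge> exp (- a * \<sigma> n)" using bounds by linarith
  then have "b * \<sigma> (n + 1) \<le> a * \<sigma> n" by simp
  also have "\<dots> \<le> a * \<sigma> (n + 1)" using a \<sigma> by (intro mult_left_mono)
  finally show ?thesis using \<sigma>(2) by simp
qed

text \<open>The final comparison of logarithms: with \<open>u = ln q \<le> k l\<close>, \<open>l = ln Q\<close> large and
  \<open>s = \<sigma> n\<close>, the outcomes of the index choice and of the dichotomy are incompatible when
  \<open>b > k (1 + a - b)\<close>; here \<open>c\<close> plays the role of \<open>ln 2\<close> and \<open>s0\<close> of \<open>\<sigma> n0\<close>.\<close>

lemma exponent_bookkeeping:
  fixes a b k u l s s0 c :: real
  assumes u: "0 \<le> u" "u \<le> k * l" and k: "0 \<le> k" and ab: "b \<le> a" "0 \<le> a"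
    and c: "0 \<le> c" and s0: "0 \<le> s0"
    and l_large: "(1 + a) * (c + s0) < l" "(1 + a) * c < (b - k * (1 + a - b)) * l"
    and first: "s \<le> s0 \<or> b * s \<le> c + u"
    and dichotomy: "u + l \<le> (1 + a) * s \<or> l < c + s"
  shows False
proof -
  have a_mono: "(1 + a) * s0 \<le> (1 + a) * (c + s0)" "c + s0 \<le> (1 + a) * (c + s0)"
    using ab c s0 by (simp_all add: algebra_simps)
  have l: "0 \<le> l" using l_large(1) a_mono(2) c s0 by linarith
  have "0 \<le> (1 + a) * c" using ab c by simp
  then have "0 < (b - k * (1 + a - b)) * l" using l_large(2) by linarith
  then have D: "0 < b - k * (1 + a - b)" using l by (simp add: zero_less_mult_iff)
  have kab: "k \<le> k * (1 + a - b)" using k ab mult_left_mono[of 1 "1 + a - b" k] by simp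
  have b: "0 < b" using D kab k by linarith
  from first show False
  proof
    assume "s \<le> s0"
    then have "(1 + a) * s \<le> (1 + a) * s0" using ab by (intro mult_left_mono) auto
    then show False using dichotomy l_large(1) u a_mono \<open>s \<le> s0\<close> by linarith
  next
    assume bs: "b * s \<le> c + u"
    from dichotomy show False
    proof
      assume "l < c + s"
      then have "b * l < b * c + b * s"
        using mult_strict_left_mono[of l "c + s" b] b by (simp add: algebra_simps)
      then have "(b - k) * l < (b + 1) * c" using bs u by (simp add: algebra_simps)
      moreover have "(b + 1) * c \<le> (1 + a) * c" using ab c by (intro mult_right_mono) auto
      moreover have "(b - k * (1 + a - b)) * l \<le> (b - k) * l"
        using l kab by (intro mult_right_mono) auto
      ultimately show False using l_large(2) by linarith
    next
      assume "u + l \<le> (1 + a) * s"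
      then have "b * (u + l) \<le> (1 + a) * (b * s)" using b by (simp add: mult_left_mono)
      also have "\<dots> \<le> (1 + a) * (c + u)" using bs ab by (intro mult_left_mono) auto
      finally have "b * l \<le> (1 + a) * c + (1 + a - b) * u" by (simp add: algebra_simps)
      moreover have "(1 + a - b) * u \<le> (1 + a - b) * (k * l)"
        using u ab by (intro mult_left_mono) auto
      ultimately show False using l_large(2) by (simp add: algebra_simps)
    qed
  qed
qed

lemma transference_exact:
  fixes M :: "'a set" and x :: "'a \<Rightarrow> real" and P :: "nat \<Rightarrow> 'a \<Rightarrow> int" and \<sigma> :: "nat \<Rightarrow> real"
  defines "L \<equiv> \<lambda>n. \<Sum>\<alpha>\<in>M. P n \<alpha> * x \<alpha>"
  assumes fin: "finite M" and z: "z \<in> M" "x z = 1" and a: "0 \<le> a"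
    and \<sigma>_pos: "\<forall>n\<ge>n0. 0 < \<sigma> n" and \<sigma>_mono: "\<forall>n\<ge>n0. \<sigma> n \<le> \<sigma> (n + 1)"
    and \<sigma>_lim: "filterlim \<sigma> at_top sequentially"
    and length: "\<forall>n\<ge>n0. (\<Sum>\<alpha>\<in>M. of_int \<bar>P n \<alpha>\<bar>) \<le> exp (\<sigma> n)"
    and bounds: "\<forall>n\<ge>n0. exp (- a * \<sigma> n) \<le> \<bar>L n\<bar> \<and> \<bar>L n\<bar> \<le> exp (- b * \<sigma> (n + 1))"
  shows "b \<le> real (card M - 1) * (1 + a - b)"
proof (rule ccontr)
  define k where "k = real (card M - 1)"
  assume "\<not> b \<le> real (card M - 1) * (1 + a - b)"
  then have D: "0 < b - k * (1 + a - b)" by (simp add: k_def)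
  have ba: "b \<le> a"
    using decay_exponents_ordered[of a \<sigma> n0 "\<bar>L n0\<bar>" b] a \<sigma>_pos \<sigma>_mono bounds by simp
  have "0 \<le> k * (1 + a - b)" using ba by (simp add: k_def)
  then have b: "0 < b" using D by linarith
  have "filterlim (\<lambda>Q::nat. ln (real Q)) at_top sequentially"
    by (rule filterlim_compose[OF ln_at_top filterlim_real_sequentially])
  then have "\<forall>\<^sub>F Q in sequentially.
      max ((1 + a) * (ln 2 + \<sigma> n0)) ((1 + a) * ln 2 / (b - k * (1 + a - b))) < ln (real Q)"
    unfolding filterlim_at_top_dense by blast
  from eventually_conj[OF this eventually_ge_at_top[of 1]] obtain Q :: nat where Q: "1 \<le> Q"
    and "max ((1 + a) * (ln 2 + \<sigma> n0)) ((1 + a) * ln 2 / (b - k * (1 + a - b))) < ln (real Q)"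
    unfolding eventually_sequentially by blast
  then have Q_large: "(1 + a) * (ln 2 + \<sigma> n0) < ln Q" "(1 + a) * ln 2 < (b - k * (1 + a - b)) * ln Q"
    using D by (auto simp: pos_divide_less_eq mult.commute)
  obtain q :: nat and A :: "'a \<Rightarrow> int" where q: "1 \<le> q" "q \<le> Q ^ (card M - 1)"
    and A: "\<forall>\<alpha>\<in>M. \<bar>real q * x \<alpha> - A \<alpha>\<bar> \<le> 1 / Q"
    using dirichlet_with_unit[of M z x Q] fin z Q by blast
  have "ln (real q) \<le> k * ln Q"
    using q Q ln_le_cancel_iff[of q "real Q ^ (card M - 1)"] by (simp add: k_def ln_realpow)
  obtain n where n: "n \<ge> n0" and small: "real q * exp (- b * \<sigma> (n + 1)) < 1/2"
    and first: "n = n0 \<or> b * \<sigma> n \<le> ln 2 + ln q"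
    using index_choice[OF \<sigma>_lim b, of q n0] q by auto
  have "real q * \<bar>L n\<bar> < 1/2"
    using mult_left_mono[of "\<bar>L n\<bar>" "exp (- b * \<sigma> (n + 1))" q] bounds n small by auto
  then have "ln q + ln Q \<le> (1 + a) * \<sigma> n \<or> ln Q < ln 2 + \<sigma> n"
    using small_linear_form_exponents[of M q x A Q "P n" "\<sigma> n" a] A q Q length bounds n
    unfolding L_def by auto
  then show False
    using exponent_bookkeeping[of "ln q" k "ln Q" b a "ln 2" "\<sigma> n0" "\<sigma> n"]
      \<open>ln q \<le> k * ln Q\<close> q ba a Q_large first \<sigma>_pos by (auto simp: k_def)
qed

lemma perturbed_exponential_bounds:
  fixes \<epsilon>1 \<epsilon>2 \<sigma> y :: "nat \<Rightarrow> real"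
  assumes \<epsilon>: "\<epsilon>1 \<longlonglongrightarrow> 0" "\<epsilon>2 \<longlonglongrightarrow> 0" and \<eta>: "\<eta> > 0"
    and \<sigma>: "\<forall>\<^sub>F n in sequentially. 0 \<le> \<sigma> n \<and> 0 \<le> \<sigma> (n + 1)"
    and bounds: "\<forall>\<^sub>F n in sequentially.
      exp (- (\<tau>1 + \<epsilon>1 n) * \<sigma> n) \<le> y n \<and> y n \<le> exp (- (\<tau>2 + \<epsilon>2 n) * \<sigma> (n + 1))"
  shows "\<forall>\<^sub>F n in sequentially.
      exp (- (\<tau>1 + \<eta>) * \<sigma> n) \<le> y n \<and> y n \<le> exp (- (\<tau>2 - \<eta>) * \<sigma> (n + 1))"
proof -
  have small: "\<forall>\<^sub>F n in sequentially. \<bar>\<epsilon>1 n\<bar> < \<eta> \<and> \<bar>\<epsilon>2 n\<bar> < \<eta>"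
    using \<epsilon>[THEN tendstoD, OF \<eta>] by (simp add: eventually_conj dist_real_def)
  show ?thesis
    using eventually_conj[OF small eventually_conj[OF \<sigma> bounds]]
  proof (rule eventually_mono, elim conjE)
    fix n assume e: "\<bar>\<epsilon>1 n\<bar> < \<eta>" "\<bar>\<epsilon>2 n\<bar> < \<eta>" and s: "0 \<le> \<sigma> n" "0 \<le> \<sigma> (n + 1)"
      and lo: "exp (- (\<tau>1 + \<epsilon>1 n) * \<sigma> n) \<le> y n"
      and hi: "y n \<le> exp (- (\<tau>2 + \<epsilon>2 n) * \<sigma> (n + 1))"
    have "(\<tau>1 + \<epsilon>1 n) * \<sigma> n \<le> (\<tau>1 + \<eta>) * \<sigma> n" using e s by (intro mult_right_mono) auto
    then have "exp (- (\<tau>1 + \<eta>) * \<sigma> n) \<le> exp (- (\<tau>1 + \<epsilon>1 n) * \<sigma> n)"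
      by (simp add: algebra_simps)
    with lo have "exp (- (\<tau>1 + \<eta>) * \<sigma> n) \<le> y n" by linarith
    moreover have "(\<tau>2 - \<eta>) * \<sigma> (n + 1) \<le> (\<tau>2 + \<epsilon>2 n) * \<sigma> (n + 1)"
      using e s by (intro mult_right_mono) auto
    then have "exp (- (\<tau>2 + \<epsilon>2 n) * \<sigma> (n + 1)) \<le> exp (- (\<tau>2 - \<eta>) * \<sigma> (n + 1))"
      by (simp add: algebra_simps)
    with hi have "y n \<le> exp (- (\<tau>2 - \<eta>) * \<sigma> (n + 1))" by linarith
    ultimately show "exp (- (\<tau>1 + \<eta>) * \<sigma> n) \<le> y n \<and> y n \<le> exp (- (\<tau>2 - \<eta>) * \<sigma> (n + 1))" ..
  qed
qed

text \<open>Transference for linear forms with exponents \<open>\<tau> + o(1)\<close>: apply the exact version with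
  \<open>a = \<tau>1 + \<eta>\<close>, \<open>b = \<tau>2 - \<eta>\<close> and let \<open>\<eta>\<close> tend to \<open>0\<close>.\<close>

lemma transference_asymptotic:
  fixes M :: "'a set" and x :: "'a \<Rightarrow> real" and P :: "nat \<Rightarrow> 'a \<Rightarrow> int"
    and \<sigma> \<epsilon>1 \<epsilon>2 :: "nat \<Rightarrow> real" and \<tau>1 \<tau>2 :: real
  defines "L \<equiv> \<lambda>n. \<Sum>\<alpha>\<in>M. P n \<alpha> * x \<alpha>"
  assumes fin: "finite M" and z: "z \<in> M" "x z = 1" and \<tau>1: "0 \<le> \<tau>1"
    and \<sigma>_pos: "\<forall>n\<ge>1. 0 < \<sigma> n" and \<sigma>_mono: "\<forall>n\<ge>1. \<sigma> n \<le> \<sigma> (n + 1)"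
    and \<sigma>_lim: "filterlim \<sigma> at_top sequentially"
    and length: "\<forall>n\<ge>1. (\<Sum>\<alpha>\<in>M. of_int \<bar>P n \<alpha>\<bar>) \<le> exp (\<sigma> n)"
    and \<epsilon>: "\<epsilon>1 \<longlonglongrightarrow> 0" "\<epsilon>2 \<longlonglongrightarrow> 0"
    and bounds: "\<forall>\<^sub>F n in sequentially.
      exp (- (\<tau>1 + \<epsilon>1 n) * \<sigma> n) \<le> \<bar>L n\<bar> \<and> \<bar>L n\<bar> \<le> exp (- (\<tau>2 + \<epsilon>2 n) * \<sigma> (n + 1))"
  shows "\<tau>2 \<le> real (card M - 1) * (1 + \<tau>1 - \<tau>2)"
proof -
  define k where "k = real (card M - 1)"
  have approx: "\<tau>2 \<le> k * (1 + \<tau>1 - \<tau>2) + (2 * k + 1) * \<eta>" if \<eta>: "\<eta> > 0" for \<eta>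
  proof -
    have "\<forall>\<^sub>F n in sequentially. 0 \<le> \<sigma> n \<and> 0 \<le> \<sigma> (n + 1)"
      using eventually_ge_at_top[of 1] by eventually_elim (simp add: less_imp_le \<sigma>_pos)
    from eventually_conj[OF perturbed_exponential_bounds[OF \<epsilon> \<eta> this bounds]
        eventually_ge_at_top[of 1]]
    obtain n0 :: nat where n0: "n0 \<ge> 1" and exact: "\<forall>n\<ge>n0.
        exp (- (\<tau>1 + \<eta>) * \<sigma> n) \<le> \<bar>L n\<bar> \<and> \<bar>L n\<bar> \<le> exp (- (\<tau>2 - \<eta>) * \<sigma> (n + 1))"
      unfolding eventually_sequentially by blast
    have "\<tau>2 - \<eta> \<le> k * (1 + (\<tau>1 + \<eta>) - (\<tau>2 - \<eta>))"
      unfolding k_def using fin z \<tau>1 \<eta> \<sigma>_lim n0 \<sigma>_pos \<sigma>_mono length exact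
      by (intro transference_exact[where x = x and P = P and \<sigma> = \<sigma>]) (auto simp: L_def)
    then show ?thesis by (simp add: algebra_simps)
  qed
  have "0 \<le> k" by (simp add: k_def)
  show ?thesis unfolding k_def[symmetric]
  proof (rule field_le_epsilon)
    fix e :: real assume "0 < e"
    then have "\<tau>2 \<le> k * (1 + \<tau>1 - \<tau>2) + (2 * k + 1) * (e / (2 * k + 1))"
      using \<open>0 \<le> k\<close> by (intro approx) simp
    then show "\<tau>2 \<le> k * (1 + \<tau>1 - \<tau>2) + e" using \<open>0 \<le> k\<close> by simp
  qed
qed

text \<open>The main theorem: \<open>P n (\<theta>)\<close> is a linear form in the \<open>(d + t) choose t\<close> monomial values
  \<open>\<theta>\<^sup>\<alpha>\<close>, one of which (the empty monomial) equals \<open>1\<close>.\<close>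

theorem mainTheorem4:
  fixes \<theta> :: "nat \<Rightarrow> real" and t d :: nat and \<tau>1 \<tau>2 :: real
    and \<sigma> :: "nat \<Rightarrow> real" and P :: "nat \<Rightarrow> (nat \<Rightarrow> nat) \<Rightarrow> int"
    and \<epsilon>1 \<epsilon>2 :: "nat \<Rightarrow> real"
  assumes d_pos: "d > 0"
    and tau_pos: "\<tau>1 > 0" "\<tau>2 > 0"
    and sigma_pos: "\<forall>n\<ge>1. \<sigma> n > 0"
    and sigma_mono: "\<forall>m n. 1 \<le> m \<longrightarrow> m \<le> n \<longrightarrow> \<sigma> m \<le> \<sigma> n"
    and sigma_lim: "filterlim \<sigma> at_top sequentially"
    and P_deg: "\<forall>n. is_mpoly_deg t d (P n)"
    and P_len: "\<forall>n\<ge>1. real_of_int (mpoly_length t d (P n)) \<le> exp (\<sigma> n)"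
    and eps1: "\<epsilon>1 \<longlonglongrightarrow> 0" and eps2: "\<epsilon>2 \<longlonglongrightarrow> 0"
    and bounds: "\<forall>\<^sub>F n in sequentially.
        exp (- (\<tau>1 + \<epsilon>1 n) * \<sigma> n) \<le> \<bar>mpoly_eval t d (P n) \<theta>\<bar> \<and>
        \<bar>mpoly_eval t d (P n) \<theta>\<bar> \<le> exp (- (\<tau>2 + \<epsilon>2 n) * \<sigma> (n + 1))"
  shows "\<tau>2 \<le> (real ((d + t) choose t) - 1) * (1 + \<tau>1 - \<tau>2)"
proof -
  define M where "M = monomials t d"
  define x where "x = (\<lambda>\<alpha>::nat \<Rightarrow> nat. \<Prod>i<t. \<theta> i ^ \<alpha> i)"
  have M: "finite M" "(\<lambda>_. 0) \<in> M" "x (\<lambda>_. 0) = 1" and card: "card M = (d + t) choose t"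
    using monomials_card[of t d] by (auto simp: M_def x_def monomials_def)
  have eval: "mpoly_eval t d (P n) \<theta> = (\<Sum>\<alpha>\<in>M. P n \<alpha> * x \<alpha>)" for n
    by (simp add: mpoly_eval_def M_def x_def)
  have length: "\<forall>n\<ge>1. (\<Sum>\<alpha>\<in>M. of_int \<bar>P n \<alpha>\<bar>) \<le> exp (\<sigma> n)"
    using P_len by (simp add: mpoly_length_def M_def)
  have "\<tau>2 \<le> real (card M - 1) * (1 + \<tau>1 - \<tau>2)"
    using M sigma_pos sigma_mono sigma_lim length eps1 eps2 bounds tau_pos
    by (intro transference_asymptotic[where x = x and P = P and \<sigma> = \<sigma>])
      (auto simp: eval)
  moreover have "1 \<le> (d + t) choose t" by (simp add: Suc_leI zero_less_binomial)
  ultimately show ?thesis by (simp add: card of_nat_diff)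
qed

end
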